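(* Let $\varrho:\mathcal{Z}\to\mathbb{R}\cup\{+\infty\}$ be a coherent risk measure with preference to small outcomes which is normalized, i.e. $\varrho[\mathbb{I}]=1$. Then for every $\zeta\in\operatorname{dom}\varrho^*$, $\int_\Omega\langle\mathbf{1},\zeta(\omega)\rangle\,P(d\omega)=1$.
   Context: $(\Omega,\mathcal{F},P)$ is a probability space, $m\ge1$, $p\in[1,\infty)$, $\mathcal{Z}=\mathcal{L}_p(\Omega,\mathcal{F},P;\mathbb{R}^m)$ with norm topology, $\mathcal{Z}^*=\mathcal{L}_q(\Omega,\mathcal{F},P;\mathbb{R}^m)$, $1/p+1/q=1$, pairing $\langle\zeta,X\rangle=\int_\Omega\langle\zeta(\omega),X(\omega)\rangle\,dP(\omega)$. $\mathbf{1}\in\mathbb{R}^m$ is the all-ones vector, $\mathbb{I}$ the constant random vector equal to $\mathbf{1}$. A coherent risk measure with preference to small outcomes is a lower semicontinuous functional $\varrho:\mathcal{Z}\to\mathbb{R}\cup\{+\infty\}$ with nonempty domain satisfying: (A1) convexity; (A2) $X_i\ge Y_i$ a.s. for all $i$ implies $\varrho[X]\ge\varrho[Y]$; (A3) $\varrho[tX]=t\varrho[X]$ for $t>0$; (A4) $\varrho[X+a\mathbb{I}]=\varrho[X]+a\varrho[\mathbb{I}]$ for all $X$, $a\in\mathbb{R}$. $\varrho^*[\zeta]=\sup_X\{\langle\zeta,X\rangle-\varrho[X]\}$ and $\operatorname{dom}\varrho^*=\{\zeta:\varrho^*[\zeta]<\infty\}$. *)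

theory Defs
  imports "HOL-Probability.Probability"
begin

text \<open>The space Z = L_p(Omega,F,P;R^m), represented by (measurable) representatives.\<close>
definition Lp_space :: "'a measure \<Rightarrow> real \<Rightarrow> ('a \<Rightarrow> real^'m) set" where
  "Lp_space M p = {X. X \<in> borel_measurable M \<and> integrable M (\<lambda>\<omega>. norm (X \<omega>) powr p)}"

text \<open>The dual space Z* = L_q with 1/p + 1/q = 1 (q = infinity when p = 1).\<close>
definition Lq_space :: "'a measure \<Rightarrow> real \<Rightarrow> ('a \<Rightarrow> real^'m) set" where
  "Lq_space M p =
     (if p = 1 then {Z. Z \<in> borel_measurable M \<and> (\<exists>C. AE \<omega> in M. norm (Z \<omega>) \<le> C)}
      else {Z. Z \<in> borel_measurable M \<and> integrable M (\<lambda>\<omega>. norm (Z \<omega>) powr (p / (p - 1)))})"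

definition pairing :: "'a measure \<Rightarrow> ('a \<Rightarrow> real^'m) \<Rightarrow> ('a \<Rightarrow> real^'m) \<Rightarrow> real" where
  "pairing M Z X = (LINT \<omega>|M. inner (Z \<omega>) (X \<omega>))"

definition one_rv :: "'a \<Rightarrow> real^'m" where
  "one_rv = (\<lambda>\<omega>. \<chi> i. 1)"

definition coherent_risk_measure ::
  "'a measure \<Rightarrow> real \<Rightarrow> (('a \<Rightarrow> real^'m) \<Rightarrow> ereal) \<Rightarrow> bool" where
  "coherent_risk_measure M p \<rho> \<longleftrightarrow>
     (\<forall>X\<in>Lp_space M p. \<rho> X \<noteq> -\<infinity>)
   \<and> (\<exists>X\<in>Lp_space M p. \<rho> X < \<infinity>)
   \<comment> \<open>lower semicontinuity w.r.t. the L_p norm\<close>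
   \<and> (\<forall>X\<in>Lp_space M p. \<forall>Xs. (\<forall>n. Xs n \<in> Lp_space M p) \<and>
          ((\<lambda>n. (LINT \<omega>|M. norm (Xs n \<omega> - X \<omega>) powr p)) \<longlonglongrightarrow> 0)
          \<longrightarrow> \<rho> X \<le> liminf (\<lambda>n. \<rho> (Xs n)))
   \<comment> \<open>(A1) convexity\<close>
   \<and> (\<forall>X\<in>Lp_space M p. \<forall>Y\<in>Lp_space M p. \<forall>t::real. 0 \<le> t \<and> t \<le> 1 \<longrightarrow>
          \<rho> (\<lambda>\<omega>. t *\<^sub>R X \<omega> + (1 - t) *\<^sub>R Y \<omega>) \<le> ereal t * \<rho> X + ereal (1 - t) * \<rho> Y)
   \<comment> \<open>(A2) monotonicity\<close>
   \<and> (\<forall>X\<in>Lp_space M p. \<forall>Y\<in>Lp_space M p.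
          (AE \<omega> in M. \<forall>i. X \<omega> $ i \<ge> Y \<omega> $ i) \<longrightarrow> \<rho> X \<ge> \<rho> Y)
   \<comment> \<open>(A3) positive homogeneity\<close>
   \<and> (\<forall>X\<in>Lp_space M p. \<forall>t::real. t > 0 \<longrightarrow> \<rho> (\<lambda>\<omega>. t *\<^sub>R X \<omega>) = ereal t * \<rho> X)
   \<comment> \<open>(A4) translation equivariance\<close>
   \<and> (\<forall>X\<in>Lp_space M p. \<forall>a::real.
          \<rho> (\<lambda>\<omega>. X \<omega> + a *\<^sub>R one_rv \<omega>) = \<rho> X + ereal a * \<rho> one_rv)"

definition risk_conj ::
  "'a measure \<Rightarrow> real \<Rightarrow> (('a \<Rightarrow> real^'m) \<Rightarrow> ereal) \<Rightarrow> ('a \<Rightarrow> real^'m) \<Rightarrow> ereal" where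
  "risk_conj M p \<rho> Z = (SUP X\<in>Lp_space M p. ereal (pairing M Z X) - \<rho> X)"

end

theory Submission
  imports Defs
begin

text \<open>Positive homogeneity forces \<open>\<rho> 0 \<in> {0, \<infinity>}\<close>, and lower semicontinuity along
  \<open>X/(n+1) \<rightarrow> 0\<close> for some \<open>X\<close> with \<open>\<rho> X < \<infinity>\<close> excludes \<open>\<infinity>\<close>. Translation equivariance then gives
  \<open>\<rho>[a\<bbbI>] = a\<close> for every real \<open>a\<close>, so the conjugate at \<open>\<zeta>\<close> is at least
  \<open>sup\<^sub>a a (\<integral>\<langle>\<one>,\<zeta>\<rangle> dP - 1)\<close>, which is finite only if \<open>\<integral>\<langle>\<one>,\<zeta>\<rangle> dP = 1\<close>.\<close>

lemma const_in_Lp_space: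
  assumes "finite_measure M"
  shows "(\<lambda>\<omega>. c) \<in> Lp_space M p"
proof -
  interpret finite_measure M by fact
  show ?thesis unfolding Lp_space_def by simp
qed

lemma Lp_norm_scaleR:
  "(LINT \<omega>|M. norm (t *\<^sub>R X \<omega>) powr p) = \<bar>t\<bar> powr p * (LINT \<omega>|M. norm (X \<omega>) powr p)"
  by (simp add: powr_mult)

lemma scaleR_in_Lp_space:
  assumes "X \<in> Lp_space M p"
  shows "(\<lambda>\<omega>. t *\<^sub>R X \<omega>) \<in> Lp_space M p"
  using assms unfolding Lp_space_def by (auto simp: powr_mult)

lemma coherent_risk_measure_proper:
  "coherent_risk_measure M p \<rho> \<Longrightarrow> \<exists>X\<in>Lp_space M p. \<rho> X < \<infinity>"
  and coherent_risk_measure_not_MInf: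
  "coherent_risk_measure M p \<rho> \<Longrightarrow> X \<in> Lp_space M p \<Longrightarrow> \<rho> X \<noteq> -\<infinity>"
  and coherent_risk_measure_lsc:
  "coherent_risk_measure M p \<rho> \<Longrightarrow> X \<in> Lp_space M p \<Longrightarrow> (\<And>n. Xs n \<in> Lp_space M p) \<Longrightarrow>
    (\<lambda>n. LINT \<omega>|M. norm (Xs n \<omega> - X \<omega>) powr p) \<longlonglongrightarrow> 0 \<Longrightarrow> \<rho> X \<le> liminf (\<lambda>n. \<rho> (Xs n))"
  and coherent_risk_measure_homogeneous:
  "coherent_risk_measure M p \<rho> \<Longrightarrow> X \<in> Lp_space M p \<Longrightarrow> 0 < t \<Longrightarrow>
    \<rho> (\<lambda>\<omega>. t *\<^sub>R X \<omega>) = ereal t * \<rho> X"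
  and coherent_risk_measure_translation:
  "coherent_risk_measure M p \<rho> \<Longrightarrow> X \<in> Lp_space M p \<Longrightarrow>
    \<rho> (\<lambda>\<omega>. X \<omega> + a *\<^sub>R one_rv \<omega>) = \<rho> X + ereal a * \<rho> one_rv"
  unfolding coherent_risk_measure_def by blast+

lemma coherent_risk_measure_zero:
  assumes crm: "coherent_risk_measure M p \<rho>" and "0 < p"
  shows "\<rho> (\<lambda>\<omega>. 0) = 0"
proof -
  have zero_in: "(\<lambda>\<omega>. 0) \<in> Lp_space M p"
    unfolding Lp_space_def using \<open>0 < p\<close> by simp
  obtain X where X: "X \<in> Lp_space M p" "\<rho> X < \<infinity>"
    using coherent_risk_measure_proper[OF crm] by blast
  then obtain r where r: "\<rho> X = ereal r"
    using coherent_risk_measure_not_MInf[OF crm] by (cases "\<rho> X") auto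
  define Xs where "Xs n = (\<lambda>\<omega>. (1 / (real n + 1)) *\<^sub>R X \<omega>)" for n :: nat
  have shrink: "(\<lambda>n. 1 / (real n + 1)) \<longlonglongrightarrow> 0"
    using LIMSEQ_inverse_real_of_nat by (simp add: inverse_eq_divide add.commute)
  have "(\<lambda>n. (1 / (real n + 1)) powr p) \<longlonglongrightarrow> 0 powr p"
    using shrink \<open>0 < p\<close> by (intro tendsto_powr') auto
  then have "(\<lambda>n. LINT \<omega>|M. norm (Xs n \<omega> - 0) powr p) \<longlonglongrightarrow> 0"
    unfolding Xs_def Lp_norm_scaleR diff_zero using \<open>0 < p\<close> by (simp add: tendsto_mult_left_zero)
  then have "\<rho> (\<lambda>\<omega>. 0) \<le> liminf (\<lambda>n. \<rho> (Xs n))"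
    using coherent_risk_measure_lsc[OF crm zero_in, of Xs] X(1)
    unfolding Xs_def by (simp add: scaleR_in_Lp_space)
  also have "(\<lambda>n. \<rho> (Xs n)) = (\<lambda>n. ereal (r * (1 / (real n + 1))))"
    unfolding Xs_def using coherent_risk_measure_homogeneous[OF crm X(1)] r
    by (simp add: add_pos_pos mult.commute)
  also have "liminf \<dots> = 0"
    using tendsto_mult_right_zero[OF shrink, of r]
    by (intro lim_imp_Liminf) (simp_all add: zero_ereal_def tendsto_ereal)
  finally have "\<rho> (\<lambda>\<omega>. 0) \<le> 0" .
  then obtain r0 where r0: "\<rho> (\<lambda>\<omega>. 0) = ereal r0"
    using coherent_risk_measure_not_MInf[OF crm zero_in] by (cases "\<rho> (\<lambda>\<omega>. 0)") auto
  have "\<rho> (\<lambda>\<omega>. 2 *\<^sub>R 0) = ereal 2 * \<rho> (\<lambda>\<omega>. 0)"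
    using coherent_risk_measure_homogeneous[OF crm zero_in] by simp
  with r0 show ?thesis by simp
qed

lemma coherent_risk_measure_const:
  assumes crm: "coherent_risk_measure M p \<rho>" and "0 < p" and "finite_measure M"
    and "\<rho> one_rv = 1"
  shows "\<rho> (\<lambda>\<omega>. a *\<^sub>R one_rv \<omega>) = a"
  using coherent_risk_measure_translation[OF crm const_in_Lp_space[OF \<open>finite_measure M\<close>], of 0 a]
  using assms by (simp add: coherent_risk_measure_zero)

lemma pairing_const:
  "pairing M \<zeta> (\<lambda>\<omega>. a *\<^sub>R one_rv \<omega>) = a * (LINT \<omega>|M. inner (\<chi> i. 1) (\<zeta> \<omega>))"
  unfolding pairing_def one_rv_def by (simp add: inner_commute)

lemma le_risk_conj:
  assumes "X \<in> Lp_space M p"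
  shows "ereal (pairing M \<zeta> X) - \<rho> X \<le> risk_conj M p \<rho> \<zeta>"
  unfolding risk_conj_def using assms by (rule SUP_upper2) simp

theorem corollary2:
  fixes M :: "'a measure" and p :: real and \<rho> :: "('a \<Rightarrow> real^'m) \<Rightarrow> ereal"
    and \<zeta> :: "'a \<Rightarrow> real^'m"
  assumes "prob_space M"
    and "1 \<le> p"
    and "coherent_risk_measure M p \<rho>"
    and "\<rho> one_rv = 1"
    and "\<zeta> \<in> Lq_space M p"
    and "risk_conj M p \<rho> \<zeta> < \<infinity>"
  shows "(LINT \<omega>|M. inner (\<chi> i. 1) (\<zeta> \<omega>)) = 1"
proof (rule ccontr)
  define c where "c = (LINT \<omega>|M. inner (\<chi> i. 1) (\<zeta> \<omega>))"
  assume "c \<noteq> 1"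
  have fin: "finite_measure M"
    using assms(1) by (simp add: prob_space_def)
  obtain K where K: "risk_conj M p \<rho> \<zeta> \<le> ereal K"
    using assms(6) by (cases "risk_conj M p \<rho> \<zeta>") auto
  have "ereal (a * (c - 1)) \<le> ereal K" for a
  proof -
    have "(\<lambda>\<omega>. a *\<^sub>R one_rv \<omega>) \<in> Lp_space M p"
      unfolding one_rv_def by (rule const_in_Lp_space[OF fin])
    then have "ereal (pairing M \<zeta> (\<lambda>\<omega>. a *\<^sub>R one_rv \<omega>)) - \<rho> (\<lambda>\<omega>. a *\<^sub>R one_rv \<omega>)
        \<le> risk_conj M p \<rho> \<zeta>"
      by (rule le_risk_conj)
    then have "ereal (a * c) - ereal a \<le> risk_conj M p \<rho> \<zeta>"
      using coherent_risk_measure_const[OF assms(3) _ fin assms(4)] assms(2)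
      by (simp add: pairing_const c_def)
    with K show ?thesis by (auto simp: algebra_simps dest: order_trans)
  qed
  from this[of "(\<bar>K\<bar> + 1) / (c - 1)"] \<open>c \<noteq> 1\<close> show False by simp
qed

end
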